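(* Assume all jobs are infinitesimal. Let $\mathcal B_{IPR}=\{B_1,\dots,B_m\}$ be the partition returned by IPR with $\rho=2$. Then $b_{\max}\le\frac{W}{\ell}$, where, for the final tentative assignment, $b_{\max}=\max_{B\in\mathcal B_{IPR},|B|\ge2}p(B)$, $\mathcal M_{\max}$ is the collection containing a bag of processing time $b_{\max}$, $W=\sum_{B\in\mathcal M_{\max}}p(B)$ and $\ell=|\mathcal M_{\max}|$.
   Context: Jobs have processing times; for a bag $B$, $p(B)$ is its total processing time. Infinitesimal jobs: all jobs have the same extremely small processing time, so that the total load can be divided into bags of arbitrary total processing times; in particular the LPT redistribution below splits a pooled load perfectly evenly among the new bags. There are $m$ machines with predicted speeds $\hat s_1\ge\dots\ge\hat s_m$; $opt(\mathbf p,\hat{\mathbf s})$ is the minimum makespan $\max_i(\text{load of } i)/\hat s_i$ of assigning jobs to machines with speeds $\hat{\mathbf s}$. Algorithm IPR. Input: $\hat{\mathbf s}$, the jobs, $\alpha\in(0,1)$, accuracy $\epsilon\in(0,1)$, $\rho\ge1$. (1) Compute a partition $B_1,\dots,B_m$ with $p(B_1)\ge\dots\ge p(B_m)$ such that putting $B_i$ on machine $i$ has makespan at most $(1+\epsilon)opt(\mathbf p,\hat{\mathbf s})$ under speeds $\hat{\mathbf s}$. (2) Set $\overline{OPT}_C=\max_i p(B_i)/\hat s_i$ and tentative assignment $\mathcal M_i=\{B_i\}$. (3) While $\max\{p(B): B\in\cup_i\mathcal M_i, |B|\ge2\}>\rho\min\{p(B):B\in\cup_i\mathcal M_i\}$: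 compute $\mathcal M'=$ LPT-Rebalance$(\mathcal M)$; if $\max_i\sum_{B\in\mathcal M'_i}p(B)/\hat s_i>(1+\alpha)\overline{OPT}_C$ return the current bags $\cup_i\mathcal M_i$; else $\mathcal M\leftarrow\mathcal M'$. (4) Return the bags $\cup_i\mathcal M_i$. LPT-Rebalance: let $B_{\min}$ be a bag of minimum $p(B)$ over all bags, $\mathcal M_{\min}$ its collection, $\mathcal M_{\max}$ a collection containing a bag of maximum $p(B)$ among bags with at least two jobs. Move $B_{\min}$ into $\mathcal M_{\max}$, let $\ell=|\mathcal M_{\max}|$, pool its jobs and redistribute them into $\ell$ new bags by LPT (jobs in non-increasing processing time, each into a currently least-loaded bag); these form the new $\mathcal M_{\max}$. *)

theory Defs
  imports Complex_Main "HOL-Library.Multiset"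
begin

(* Infinitesimal-jobs model: a bag is represented by its total processing
   time p(B) (a nonnegative real); a tentative assignment M maps each machine
   index i < m (machines indexed 0..m-1) to the multiset of (loads of) bags
   in its collection M_i.  A bag of infinitesimal jobs has at least two jobs
   iff its total processing time is positive. *)

type_synonym tassign = "nat \<Rightarrow> real multiset"

definition opt_inf :: "nat \<Rightarrow> (nat \<Rightarrow> real) \<Rightarrow> real \<Rightarrow> real" where
  "opt_inf m s P = Inf {Max ((\<lambda>i. x i / s i) ` {..<m}) | x.
      (\<forall>i<m. 0 \<le> x i) \<and> (\<Sum>i<m. x i) = P}"

definition all_bags :: "nat \<Rightarrow> tassign \<Rightarrow> real multiset" where
  "all_bags m M = (\<Sum>i<m. M i)"

definition big_bags :: "nat \<Rightarrow> tassign \<Rightarrow> real multiset" where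
  "big_bags m M = filter_mset (\<lambda>b. 0 < b) (all_bags m M)"

definition makespan :: "nat \<Rightarrow> (nat \<Rightarrow> real) \<Rightarrow> tassign \<Rightarrow> real" where
  "makespan m s M = Max ((\<lambda>i. sum_mset (M i) / s i) ` {..<m})"

definition loop_cond :: "nat \<Rightarrow> real \<Rightarrow> tassign \<Rightarrow> bool" where
  "loop_cond m \<rho> M \<longleftrightarrow> big_bags m M \<noteq> {#} \<and>
     Max (set_mset (big_bags m M)) > \<rho> * Min (set_mset (all_bags m M))"

(* M' is a possible result of LPT-Rebalance(M) (any tie-breaking) *)
definition lpt_rebalance :: "nat \<Rightarrow> tassign \<Rightarrow> tassign \<Rightarrow> bool" where
  "lpt_rebalance m M M' \<longleftrightarrow>
     (\<exists>imin imax bmin bmax. imin < m \<and> imax < m \<and>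
        bmin \<in># M imin \<and> bmin = Min (set_mset (all_bags m M)) \<and>
        bmax \<in># M imax \<and> 0 < bmax \<and> bmax = Max (set_mset (big_bags m M)) \<and>
        (let M1 = M(imin := M imin - {#bmin#});
             M2 = M1(imax := M1 imax + {#bmin#});
             l = size (M2 imax); W = sum_mset (M2 imax)
         in M' = M2(imax := replicate_mset l (W / real l))))"

(* M is the final tentative assignment of some run of IPR on speeds s,
   total (infinitesimal) job load P, with parameters alpha, eps, rho. *)
definition ipr_final ::
  "nat \<Rightarrow> (nat \<Rightarrow> real) \<Rightarrow> real \<Rightarrow> real \<Rightarrow> real \<Rightarrow> real \<Rightarrow> tassign \<Rightarrow> bool" where
  "ipr_final m s P \<alpha> \<epsilon> \<rho> M \<longleftrightarrow>
     (\<exists>B :: nat \<Rightarrow> real. \<exists>Ms :: nat \<Rightarrow> tassign. \<exists>k :: nat.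
        (\<forall>i<m. 0 \<le> B i) \<and> (\<Sum>i<m. B i) = P \<and>
        (\<forall>i j. i \<le> j \<longrightarrow> j < m \<longrightarrow> B j \<le> B i) \<and>
        Max ((\<lambda>i. B i / s i) ` {..<m}) \<le> (1 + \<epsilon>) * opt_inf m s P \<and>
        (let OPTC = Max ((\<lambda>i. B i / s i) ` {..<m}) in
          Ms 0 = (\<lambda>i. {#B i#}) \<and>
          (\<forall>j<k. loop_cond m \<rho> (Ms j) \<and> lpt_rebalance m (Ms j) (Ms (Suc j)) \<and>
                  makespan m s (Ms (Suc j)) \<le> (1 + \<alpha>) * OPTC) \<and>
          (\<not> loop_cond m \<rho> (Ms k) \<or>
           (\<exists>M'. lpt_rebalance m (Ms k) M' \<and> makespan m s M' > (1 + \<alpha>) * OPTC)) \<and>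
          M = Ms k))"

end

theory Submission
  imports Defs
begin

text \<open>With infinitesimal jobs, LPT splits the pooled load of a collection exactly evenly, so
  the rebalanced collection consists of equal bags, while any other collection can at most lose
  a bag. Starting from singleton collections, every collection of every tentative assignment
  therefore consists of equal bags, and each bag equals the average load of its collection. This
  holds for every run of IPR, whatever \<rho>, \<alpha>, \<epsilon> and the speeds are.\<close>

definition uniform_collections :: "tassign \<Rightarrow> bool" where
  "uniform_collections M \<longleftrightarrow> (\<forall>i. \<forall>x\<in>#M i. \<forall>y\<in>#M i. x = y)"

lemma mean_of_constant_mset:
  fixes A :: "'a::field_char_0 multiset"
  assumes "\<forall>x\<in>#A. x = b" and "b \<in># A"
  shows "sum_mset A / of_nat (size A) = b"
proof -
  have "A = replicate_mset (size A) b"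
    using assms(1) by (induction A) auto
  then have "sum_mset A = of_nat (size A) * b"
    by (metis sum_mset_replicate_mset)
  moreover have "size A \<noteq> 0"
    using assms(2) by auto
  ultimately show ?thesis
    by simp
qed

lemma lpt_rebalance_shape:
  assumes "lpt_rebalance m M M'"
  obtains imax l c where "M' imax = replicate_mset l c" and "\<And>i. i \<noteq> imax \<Longrightarrow> M' i \<subseteq># M i"
proof -
  obtain imin imax bmin l c where
    M': "M' = (M(imin := M imin - {#bmin#}))(imax := replicate_mset l c)"
    using assms unfolding lpt_rebalance_def Let_def fun_upd_upd by blast
  show ?thesis
  proof (rule that)
    show "M' imax = replicate_mset l c"
      by (simp add: M')
    show "M' i \<subseteq># M i" if "i \<noteq> imax" for i
      using that by (simp add: M')
  qed
qed

lemma uniform_collections_lpt_rebalance: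
  assumes "uniform_collections M" and "lpt_rebalance m M M'"
  shows "uniform_collections M'"
proof -
  obtain imax l c where
    rebalanced: "M' imax = replicate_mset l c" and
    shrunk: "\<And>i. i \<noteq> imax \<Longrightarrow> M' i \<subseteq># M i"
    using lpt_rebalance_shape[OF assms(2)] by blast
  show ?thesis
    unfolding uniform_collections_def
  proof (intro allI ballI)
    fix i x y
    assume x: "x \<in># M' i" and y: "y \<in># M' i"
    show "x = y"
    proof (cases "i = imax")
      case True
      then show ?thesis
        using x y rebalanced by (simp split: if_splits)
    next
      case False
      then have "M' i \<subseteq># M i"
        by (rule shrunk)
      then have "x \<in># M i" and "y \<in># M i"
        using x y by (simp_all add: mset_subset_eqD)
      then show ?thesis
        using assms(1) unfolding uniform_collections_def by blast
    qed
  qed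
qed

lemma uniform_collections_ipr_final:
  assumes "ipr_final m s P \<alpha> \<epsilon> \<rho> M"
  shows "uniform_collections M"
proof -
  obtain B :: "nat \<Rightarrow> real" and Ms :: "nat \<Rightarrow> tassign" and k where
    start: "Ms 0 = (\<lambda>i. {#B i#})" and
    steps: "\<forall>j<k. lpt_rebalance m (Ms j) (Ms (Suc j))" and
    final: "M = Ms k"
    using assms unfolding ipr_final_def Let_def by blast
  have "uniform_collections (Ms j)" if "j \<le> k" for j
    using that
  proof (induction j)
    case 0
    then show ?case
      using start by (simp add: uniform_collections_def)
  next
    case (Suc j)
    have "uniform_collections (Ms j)"
      using Suc by simp
    moreover have "lpt_rebalance m (Ms j) (Ms (Suc j))"
      using steps Suc.prems by simp
    ultimately show ?case
      by (rule uniform_collections_lpt_rebalance)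
  qed
  then show ?thesis
    using final by simp
qed

theorem lemma12:
  fixes m :: nat and s :: "nat \<Rightarrow> real" and P \<alpha> \<epsilon> :: real and M :: tassign
  assumes "1 \<le> m"
    and "\<forall>i<m. 0 < s i"
    and "\<forall>i j. i \<le> j \<longrightarrow> j < m \<longrightarrow> s j \<le> s i"
    and "0 \<le> P"
    and "0 < \<alpha>" "\<alpha> < 1" "0 < \<epsilon>" "\<epsilon> < 1"
    and "ipr_final m s P \<alpha> \<epsilon> 2 M"
  shows "\<forall>i<m. \<forall>b. b \<in># M i \<and> 0 < b \<and> b = Max (set_mset (big_bags m M)) \<longrightarrow>
           b \<le> sum_mset (M i) / real (size (M i))"
proof (intro allI impI)
  fix i b
  assume "i < m" and b: "b \<in># M i \<and> 0 < b \<and> b = Max (set_mset (big_bags m M))"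
  have "uniform_collections M"
    using assms(9) by (rule uniform_collections_ipr_final)
  then have "sum_mset (M i) / real (size (M i)) = b"
    using b by (intro mean_of_constant_mset) (auto simp: uniform_collections_def)
  then show "b \<le> sum_mset (M i) / real (size (M i))"
    by simp
qed

end
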